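(* Let $A$ be an $n\times n$ dilation matrix and let $\mu$ be its smallest singular value. If $\mu>2$, then $A$ yields a radix representation of $\mathbb{Z}^n$ with digit set $D=A(F)\cap\mathbb{Z}^n$, where $F=[-\tfrac12,\tfrac12)^n$; that is, every $x\in\mathbb{Z}^n$ can be written as $\sum_{j=0}^NA^jd_j$ with $N\ge0$ and $d_j\in D$.
   Context: A dilation matrix is an $n\times n$ matrix with integer entries all of whose eigenvalues $\lambda$ satisfy $|\lambda|>1$. $D$ is a complete set of coset representatives of $\mathbb{Z}^n/A(\mathbb{Z}^n)$. *)

theory Defs
  imports "HOL-Analysis.Analysis"
begin

definition int_lattice :: "(real^'n) set" where
  "int_lattice = {x. \<forall>i. x $ i \<in> \<int>}"

definition int_matrix :: "real^'n^'n \<Rightarrow> bool" where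
  "int_matrix A \<longleftrightarrow> (\<forall>i j. A $ i $ j \<in> \<int>)"

definition cmat :: "real^'n^'n \<Rightarrow> complex^'n^'n" where
  "cmat A = (\<chi> i j. complex_of_real (A $ i $ j))"

definition eigenvalues :: "real^'n^'n \<Rightarrow> complex set" where
  "eigenvalues A = {l. \<exists>v::complex^'n. v \<noteq> 0 \<and> cmat A *v v = l *s v}"

definition dilation_matrix :: "real^'n^'n \<Rightarrow> bool" where
  "dilation_matrix A \<longleftrightarrow> int_matrix A \<and> (\<forall>l \<in> eigenvalues A. cmod l > 1)"

definition singular_values :: "real^'n^'n \<Rightarrow> real set" where
  "singular_values A =
     sqrt ` {l. \<exists>v::real^'n. v \<noteq> 0 \<and> (transpose A ** A) *v v = l *s v}"

definition smallest_singular_value :: "real^'n^'n \<Rightarrow> real" where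
  "smallest_singular_value A = Min (singular_values A)"

primrec mat_pow :: "real^'n^'n \<Rightarrow> nat \<Rightarrow> real^'n^'n" where
  "mat_pow A 0 = mat 1"
| "mat_pow A (Suc k) = A ** mat_pow A k"

definition half_box :: "(real^'n) set" where
  "half_box = {x. \<forall>i. -1/2 \<le> x $ i \<and> x $ i < 1/2}"

definition digit_set :: "real^'n^'n \<Rightarrow> (real^'n) set" where
  "digit_set A = ((\<lambda>x. A *v x) ` half_box) \<inter> int_lattice"

end

theory Submission
  imports Defs
begin

(*
  Write s for the smallest singular value of A.  Then |A w| >= s |w| for every w,
  so s > 2 makes A injective, hence bijective, and expanding by a factor larger than 2.
  Given a nonzero lattice point x, let y = A^-1 x and let r be y rounded coordinatewise to
  the nearest integer (ties rounded up).  Then y - r lies in F = [-1/2,1/2)^n, so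
  d = x - A r = A (y - r) is a digit, and |r| <= 2 |y| < |A y| = |x|.  Thus x = d + A r
  with a lattice point r of strictly smaller norm; since squared norms of lattice points
  are integers, induction on them expands every lattice point in base A.
*)

section \<open>Symmetric matrices and the Gram matrix\<close>

lemma symmetric_matrix_self_adjoint:
  fixes M :: "real^'n^'n"
  assumes "transpose M = M"
  shows "(M *v u) \<bullet> v = u \<bullet> (M *v v)"
  by (subst (1) assms[symmetric]) (simp add: dot_lmul_matrix)

text \<open>Eigenvectors of a symmetric matrix for distinct eigenvalues are orthogonal,
  hence linearly independent; so a symmetric matrix has only finitely many eigenvalues.\<close>
lemma symmetric_matrix_eigenvalues_finite:
  fixes M :: "real^'n^'n"
  assumes sym: "transpose M = M"
  shows "finite {l. \<exists>v::real^'n. v \<noteq> 0 \<and> M *v v = l *s v}" (is "finite ?E")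
proof -
  define w where "w l = (SOME v. v \<noteq> 0 \<and> M *v v = l *s v)" for l
  have w: "w l \<noteq> 0 \<and> M *v w l = l *s w l" if "l \<in> ?E" for l
    using someI_ex[OF that[unfolded mem_Collect_eq]] unfolding w_def .
  have orth: "w l1 \<bullet> w l2 = 0" if "l1 \<in> ?E" "l2 \<in> ?E" "l1 \<noteq> l2" for l1 l2
  proof -
    have "l1 * (w l1 \<bullet> w l2) = (M *v w l1) \<bullet> w l2"
      using w[OF that(1)] by (simp add: scalar_mult_eq_scaleR)
    also have "\<dots> = w l1 \<bullet> (M *v w l2)" by (rule symmetric_matrix_self_adjoint[OF sym])
    also have "\<dots> = l2 * (w l1 \<bullet> w l2)"
      using w[OF that(2)] by (simp add: scalar_mult_eq_scaleR)
    finally show ?thesis using that(3) by auto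
  qed
  have inj: "inj_on w ?E"
  proof (rule inj_onI)
    fix a b assume ab: "a \<in> ?E" "b \<in> ?E" "w a = w b"
    show "a = b"
    proof (rule ccontr)
      assume "a \<noteq> b"
      then have "w a \<bullet> w a = 0" using orth[OF ab(1,2)] ab(3) by simp
      then show False using w[OF ab(1)] by simp
    qed
  qed
  have "pairwise orthogonal (w ` ?E)"
  proof (rule pairwiseI)
    fix x y assume xy: "x \<in> w ` ?E" "y \<in> w ` ?E" "x \<noteq> y"
    obtain l1 where l1: "x = w l1" "l1 \<in> ?E" using xy(1) by (rule imageE)
    obtain l2 where l2: "y = w l2" "l2 \<in> ?E" using xy(2) by (rule imageE)
    have "l1 \<noteq> l2" using xy(3) l1(1) l2(1) by metis
    then show "orthogonal x y" unfolding orthogonal_def l1(1) l2(1) by (rule orth[OF l1(2) l2(2)])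
  qed
  moreover have "0 \<notin> w ` ?E"
  proof
    assume "0 \<in> w ` ?E"
    then obtain l where "0 = w l" "l \<in> ?E" by (rule imageE)
    then show False using w[of l] by simp
  qed
  ultimately have "independent (w ` ?E)" by (rule pairwise_orthogonal_independent)
  then have "finite (w ` ?E)" by (rule independent_imp_finite)
  then show ?thesis by (rule finite_imageD[OF _ inj])
qed

lemma gram_matrix_inner:
  fixes A :: "real^'n^'m"
  shows "((transpose A ** A) *v a) \<bullet> b = (A *v a) \<bullet> (A *v b)"
  by (simp add: matrix_vector_mul_assoc[symmetric] dot_lmul_matrix)

lemma gram_matrix_symmetric: "transpose (transpose A ** A) = transpose A ** (A::real^'n^'m)"
  by (simp add: matrix_transpose_mul)

section \<open>The minimum of the Rayleigh quotient\<close>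

text \<open>|A v|^2 is continuous on the compact unit sphere, so it attains a minimum there;
  by homogeneity that minimum bounds |A w|^2 / |w|^2 for all w.\<close>
lemma gram_minimiser_exists:
  fixes A :: "real^'n^'m"
  shows "\<exists>v0. norm v0 = 1 \<and> (\<forall>w. norm (A *v v0)^2 * norm w^2 \<le> norm (A *v w)^2)"
proof -
  define f where "f v = norm (A *v v)^2" for v :: "real^'n"
  have cont: "continuous_on (sphere 0 1) f"
    unfolding f_def by (intro continuous_intros linear_continuous_on matrix_vector_mul_bounded_linear)
  have "(SOME i. i \<in> Basis) \<in> sphere (0::real^'n) 1" by (simp add: SOME_Basis norm_Basis)
  then have "sphere (0::real^'n) 1 \<noteq> {}" by blast
  then obtain v0 where v0: "v0 \<in> sphere 0 1" and minimal: "\<forall>y\<in>sphere 0 1. f v0 \<le> f y"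
    using continuous_attains_inf[OF compact_sphere _ cont] by blast
  have "f v0 * norm w^2 \<le> f w" for w
  proof (cases "w = 0")
    case False
    then have "f v0 \<le> f ((1 / norm w) *\<^sub>R w)" using minimal by simp
    also have "f ((1 / norm w) *\<^sub>R w) = f w / norm w^2"
      unfolding f_def by (simp add: matrix_vector_mult_scaleR power_divide)
    finally show ?thesis using False by (simp add: field_simps)
  qed (simp add: f_def)
  then show ?thesis using v0 unfolding f_def by auto
qed

lemma nonneg_quadratic_linear_coeff:
  fixes a c :: real
  assumes nonneg: "\<And>t. 0 \<le> 2 * t * a + t^2 * c"
  shows "a = 0"
proof -
  have "a * a \<le> 0"
  proof (cases "c \<le> 0")
    case True
    have "0 \<le> 2 * (-a) * a + (-a)^2 * c" by (rule nonneg)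
    moreover have "(-a)^2 * c \<le> 0" using True by (simp add: mult_nonneg_nonpos)
    ultimately show ?thesis by simp
  next
    case False
    have "0 \<le> 2 * (-a/c) * a + (-a/c)^2 * c" by (rule nonneg)
    also have "\<dots> = - (a*a) / c" using False by (simp add: power2_eq_square field_simps)
    finally show ?thesis using False by (simp add: divide_le_0_iff)
  qed
  then have "a * a = 0" using zero_le_square[of a] by linarith
  then show ?thesis by simp
qed

lemma norm_add_scaled_square:
  fixes p q :: "'a::real_inner"
  shows "norm (p + t *\<^sub>R q)^2 = norm p^2 + 2*t*(p \<bullet> q) + t^2 * norm q^2"
  unfolding power2_norm_eq_inner
  by (simp add: inner_add_left inner_add_right inner_commute[of q p] power2_eq_square algebra_simps)

text \<open>First-order condition: a unit vector minimising |A v|^2 is an eigenvector of A^T A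
  with eigenvalue m = |A v0|^2.  Perturbing v0 by t u with u = A^T A v0 - m v0 gives a
  nonnegative quadratic in t whose linear coefficient is |u|^2.\<close>
lemma gram_minimiser_eigenvector:
  fixes A :: "real^'n^'m"
  assumes unit: "norm v0 = 1"
    and minimal: "\<And>w. norm (A *v v0)^2 * norm w^2 \<le> norm (A *v w)^2"
  shows "(transpose A ** A) *v v0 = norm (A *v v0)^2 *s v0"
proof -
  define m where "m = norm (A *v v0)^2"
  define u where "u = (transpose A ** A) *v v0 - m *s v0"
  define c where "c = norm (A *v u)^2 - m * norm u^2"
  have linear_coeff: "(A *v v0) \<bullet> (A *v u) - m * (v0 \<bullet> u) = u \<bullet> u"
    unfolding u_def
    by (simp add: gram_matrix_inner[symmetric] inner_diff_left scalar_mult_eq_scaleR inner_commute)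
  have "0 \<le> 2 * t * (u \<bullet> u) + t^2 * c" for t
  proof -
    have image: "A *v (v0 + t *\<^sub>R u) = A *v v0 + t *\<^sub>R (A *v u)"
      by (simp add: matrix_vector_right_distrib matrix_vector_mult_scaleR)
    have "m * norm (v0 + t *\<^sub>R u)^2 \<le> norm (A *v (v0 + t *\<^sub>R u))^2"
      using minimal unfolding m_def .
    then show ?thesis
      unfolding image norm_add_scaled_square linear_coeff[symmetric] c_def m_def
      using unit by (simp add: algebra_simps)
  qed
  then have "u \<bullet> u = 0" by (rule nonneg_quadratic_linear_coeff)
  then show ?thesis unfolding u_def m_def by simp
qed

text \<open>The smallest singular value s of A satisfies s |w| <= |A w|: the minimum m of
  |A v|^2 on the unit sphere is an eigenvalue of A^T A, so s <= sqrt m.\<close>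
lemma smallest_singular_value_lower_bound:
  fixes A :: "real^'n^'n"
  shows "smallest_singular_value A * norm w \<le> norm (A *v w)"
proof -
  obtain v0 where unit: "norm v0 = 1"
    and minimal: "\<And>w. norm (A *v v0)^2 * norm w^2 \<le> norm (A *v w)^2"
    using gram_minimiser_exists by blast
  define m where "m = norm (A *v v0)^2"
  have "v0 \<noteq> 0" using unit by auto
  then have "m \<in> {l. \<exists>v::real^'n. v \<noteq> 0 \<and> (transpose A ** A) *v v = l *s v}"
    using gram_minimiser_eigenvector[OF unit minimal] unfolding m_def by (auto intro!: exI[of _ v0])
  moreover have "finite (singular_values A)"
    unfolding singular_values_def
    using symmetric_matrix_eigenvalues_finite[OF gram_matrix_symmetric] by blast
  ultimately have "smallest_singular_value A \<le> sqrt m"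
    unfolding smallest_singular_value_def singular_values_def by (simp add: Min_le)
  then have "smallest_singular_value A * norm w \<le> sqrt m * norm w"
    by (rule mult_right_mono) simp
  also have "sqrt m * norm w \<le> norm (A *v w)"
    using real_sqrt_le_mono[OF minimal[of w]]
    by (simp add: m_def real_sqrt_mult)
  finally show ?thesis .
qed

lemma positive_singular_value_surj:
  fixes A :: "real^'n^'n"
  assumes "smallest_singular_value A > 0"
  shows "surj ((*v) A)"
proof -
  have "inj ((*v) A)"
  proof (rule injI)
    fix a b assume "A *v a = A *v b"
    then have "smallest_singular_value A * norm (a - b) \<le> 0"
      using smallest_singular_value_lower_bound[of A "a - b"]
      by (simp add: matrix_vector_mult_diff_distrib)
    then show "a = b" using assms by (simp add: mult_le_0_iff)
  qed
  then show ?thesis by (rule linear_injective_imp_surjective[OF matrix_vector_mul_linear]) simp_all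
qed

section \<open>The integer lattice\<close>

lemma int_lattice_diff: "x \<in> int_lattice \<Longrightarrow> y \<in> int_lattice \<Longrightarrow> x - y \<in> int_lattice"
  unfolding int_lattice_def by (auto intro: Ints_diff)

lemma int_matrix_maps_lattice: "int_matrix A \<Longrightarrow> r \<in> int_lattice \<Longrightarrow> A *v r \<in> int_lattice"
  unfolding int_lattice_def int_matrix_def matrix_vector_mult_def
  by (auto intro!: Ints_sum Ints_mult)

lemma int_lattice_norm_square_Ints: "x \<in> int_lattice \<Longrightarrow> norm x ^ 2 \<in> \<int>"
  unfolding power2_norm_eq_inner inner_vec_def int_lattice_def by (intro Ints_sum Ints_mult) auto

text \<open>Induction along decreasing norm on the lattice; it terminates because squared norms
  of lattice points are nonnegative integers.\<close>
lemma int_lattice_norm_induct [consumes 1, case_names zero step]: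
  fixes x :: "real^'n"
  assumes x: "x \<in> int_lattice"
    and zero: "P 0"
    and step: "\<And>x. x \<in> int_lattice \<Longrightarrow> x \<noteq> 0 \<Longrightarrow>
                    (\<And>r. r \<in> int_lattice \<Longrightarrow> norm r < norm x \<Longrightarrow> P r) \<Longrightarrow> P x"
  shows "P x"
proof -
  have "\<forall>x::real^'n \<in> int_lattice. nat \<lfloor>norm x ^ 2\<rfloor> = k \<longrightarrow> P x" for k
  proof (induction k rule: less_induct)
    case (less k)
    show ?case
    proof (intro ballI impI)
      fix x :: "real^'n" assume xl: "x \<in> int_lattice" and k: "nat \<lfloor>norm x ^ 2\<rfloor> = k"
      have "P r" if rl: "r \<in> int_lattice" and lt: "norm r < norm x" for r
      proof -
        obtain a where a: "norm r ^ 2 = of_int a"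
          using int_lattice_norm_square_Ints[OF rl] by (elim Ints_cases)
        obtain b where b: "norm x ^ 2 = of_int b"
          using int_lattice_norm_square_Ints[OF xl] by (elim Ints_cases)
        have "0 \<le> a" "a < b"
          using a b zero_le_power2[of "norm r"] power_strict_mono[OF lt, of 2] by simp_all
        then have "nat \<lfloor>norm r ^ 2\<rfloor> < k" using a b k by simp
        then show ?thesis using less.IH rl by blast
      qed
      then show "P x" using zero step[OF xl] by blast
    qed
  qed
  then show ?thesis using x by blast
qed

section \<open>Rounding to the nearest lattice point and the digit set\<close>

text \<open>Coordinatewise rounding to the nearest integer, ties rounded up, so that the error
  lies in the half-open box F.\<close>
definition nearest_lattice_point :: "real^'n \<Rightarrow> real^'n" where
  "nearest_lattice_point y = (\<chi> i. of_int \<lfloor>y $ i + 1/2\<rfloor>)"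

lemma nearest_lattice_point_in_lattice: "nearest_lattice_point y \<in> int_lattice"
  unfolding nearest_lattice_point_def int_lattice_def by simp

lemma nearest_lattice_point_error: "y - nearest_lattice_point y \<in> half_box"
  unfolding half_box_def nearest_lattice_point_def by (auto; linarith)

text \<open>Rounding a real number to the nearest integer at most doubles its absolute value,
  since a nonzero result forces |y| >= 1/2.\<close>
lemma round_half_up_abs_le: "\<bar>real_of_int \<lfloor>y + 1/2\<rfloor>\<bar> \<le> 2 * \<bar>y\<bar>"
proof (cases "\<lfloor>y + 1/2\<rfloor> = 0")
  case False
  then have "\<lfloor>y + 1/2\<rfloor> \<ge> 1 \<or> \<lfloor>y + 1/2\<rfloor> \<le> -1" by linarith
  then show ?thesis by (auto simp: abs_if) linarith+
qed simp

lemma nearest_lattice_point_norm: "norm (nearest_lattice_point y) \<le> 2 * norm y"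
proof -
  have "norm (nearest_lattice_point y) \<le> norm (2 *\<^sub>R y)"
    by (rule norm_le_componentwise_cart) (simp add: nearest_lattice_point_def round_half_up_abs_le abs_mult)
  then show ?thesis by simp
qed

text \<open>If x = A y is a lattice point, subtracting A r for the nearest lattice point r of y
  leaves a digit, since x - A r = A (y - r) with y - r in F.\<close>
lemma digit_from_rounding:
  assumes "int_matrix A" and x: "x \<in> int_lattice" and xy: "x = A *v y"
  shows "x - A *v nearest_lattice_point y \<in> digit_set A"
proof -
  have "x - A *v nearest_lattice_point y = A *v (y - nearest_lattice_point y)"
    unfolding xy by (simp add: matrix_vector_mult_diff_distrib)
  moreover have "x - A *v nearest_lattice_point y \<in> int_lattice"
    using int_lattice_diff[OF x int_matrix_maps_lattice[OF assms(1) nearest_lattice_point_in_lattice]] .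
  ultimately show ?thesis
    unfolding digit_set_def using nearest_lattice_point_error by blast
qed

lemma digit_division:
  fixes A :: "real^'n^'n"
  assumes int: "int_matrix A" and s: "smallest_singular_value A > 2"
    and x: "x \<in> int_lattice" "x \<noteq> 0"
  shows "\<exists>d r. d \<in> digit_set A \<and> r \<in> int_lattice \<and> x = d + A *v r \<and> norm r < norm x"
proof -
  obtain y where xy: "x = A *v y"
    using positive_singular_value_surj[of A] s by (metis surjD order.strict_trans zero_less_numeral)
  have "y \<noteq> 0" using xy x(2) by auto
  have "norm (nearest_lattice_point y) \<le> 2 * norm y" by (rule nearest_lattice_point_norm)
  also have "\<dots> < smallest_singular_value A * norm y" using s \<open>y \<noteq> 0\<close> by simp
  also have "\<dots> \<le> norm x" unfolding xy by (rule smallest_singular_value_lower_bound)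
  finally show ?thesis
    using digit_from_rounding[OF int x(1) xy] nearest_lattice_point_in_lattice
    by (metis diff_add_cancel)
qed

definition radix_expansion :: "real^'n^'n \<Rightarrow> real^'n \<Rightarrow> bool" where
  "radix_expansion A x \<longleftrightarrow> (\<exists>N::nat. \<exists>d::nat \<Rightarrow> real^'n.
      (\<forall>j\<le>N. d j \<in> digit_set A) \<and> x = (\<Sum>j\<le>N. mat_pow A j *v d j))"

lemma radix_expansion_zero: "radix_expansion A 0"
proof -
  have "0 \<in> digit_set A"
    unfolding digit_set_def half_box_def int_lattice_def by (auto intro!: image_eqI[of _ _ 0])
  then show ?thesis unfolding radix_expansion_def by (intro exI[of _ 0] exI[of _ "\<lambda>_. 0"]) simp
qed

text \<open>Expansions are closed under x |-> d + A x: shift the digits up by one place.\<close>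
lemma radix_expansion_step:
  assumes d: "d \<in> digit_set A" and r: "radix_expansion A r"
  shows "radix_expansion A (d + A *v r)"
proof -
  obtain N e where e: "\<forall>j\<le>N. e j \<in> digit_set A" and re: "r = (\<Sum>j\<le>N. mat_pow A j *v e j)"
    using r unfolding radix_expansion_def by blast
  define e' where "e' j = (case j of 0 \<Rightarrow> d | Suc i \<Rightarrow> e i)" for j
  have "(\<Sum>j\<le>Suc N. mat_pow A j *v e' j) = d + (\<Sum>j\<le>N. A *v (mat_pow A j *v e j))"
    unfolding sum.atMost_Suc_shift e'_def by (simp add: matrix_vector_mul_assoc)
  also have "(\<Sum>j\<le>N. A *v (mat_pow A j *v e j)) = A *v r"
    unfolding re by (simp add: linear_sum[OF matrix_vector_mul_linear] o_def)
  finally have "d + A *v r = (\<Sum>j\<le>Suc N. mat_pow A j *v e' j)" ..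
  moreover have "\<forall>j\<le>Suc N. e' j \<in> digit_set A"
    using d e by (auto simp: e'_def split: nat.split)
  ultimately show ?thesis unfolding radix_expansion_def by blast
qed

theorem mainTheorem8:
  fixes A :: "real^'n^'n"
  assumes "dilation_matrix A"
    and "smallest_singular_value A > 2"
  shows "\<forall>x \<in> int_lattice. \<exists>N::nat. \<exists>d::nat \<Rightarrow> real^'n.
           (\<forall>j\<le>N. d j \<in> digit_set A) \<and> x = (\<Sum>j\<le>N. mat_pow A j *v d j)"
proof
  fix x :: "real^'n" assume "x \<in> int_lattice"
  have int: "int_matrix A" using assms(1) unfolding dilation_matrix_def by simp
  from \<open>x \<in> int_lattice\<close> have "radix_expansion A x"
  proof (induction rule: int_lattice_norm_induct)
    case zero show ?case by (rule radix_expansion_zero)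
  next
    case (step x)
    obtain d r where "d \<in> digit_set A" "r \<in> int_lattice" "x = d + A *v r" "norm r < norm x"
      using digit_division[OF int assms(2) step(1,2)] by blast
    then show ?case using radix_expansion_step step(3) by metis
  qed
  then show "\<exists>N d. (\<forall>j\<le>N. d j \<in> digit_set A) \<and> x = (\<Sum>j\<le>N. mat_pow A j *v d j)"
    unfolding radix_expansion_def .
qed

end
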